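(* Let $G=H\langle a\rangle$ be a finite group, where $H$ is a normal abelian subgroup of $G$ and the order of $a$ is coprime to $|H|$. Then $\mathcal R(a)=[H,a]$.
   Context: Commutators: $[x,y]=x^{-1}y^{-1}xy$, left-normed, and $[x,{}_n\,y]=[x,y,\dots,y]$ with $y$ repeated $n$ times. $\mathcal R(a)$ denotes the minimal right Engel sink of $a$ in $G$: the smallest subset of $G$ such that for every $x\in G$ the commutators $[a,{}_n\,x]$ lie in it for all sufficiently large $n$ (for finite $G$ it exists). $[H,a]$ denotes the subgroup generated by all $h^{-1}h^{a}$, $h\in H$. *)

theory Defs
  imports "HOL-Algebra.Algebra"
begin

definition commutator :: "('a, 'b) monoid_scheme \<Rightarrow> 'a \<Rightarrow> 'a \<Rightarrow> 'a" where
  "commutator G x y = inv\<^bsub>G\<^esub> x \<otimes>\<^bsub>G\<^esub> inv\<^bsub>G\<^esub> y \<otimes>\<^bsub>G\<^esub> x \<otimes>\<^bsub>G\<^esub> y"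

fun engel_comm :: "('a, 'b) monoid_scheme \<Rightarrow> 'a \<Rightarrow> nat \<Rightarrow> 'a \<Rightarrow> 'a" where
  "engel_comm G a 0 x = a"
| "engel_comm G a (Suc n) x = commutator G (engel_comm G a n x) x"

definition right_engel_sink :: "('a, 'b) monoid_scheme \<Rightarrow> 'a \<Rightarrow> 'a set \<Rightarrow> bool" where
  "right_engel_sink G a S \<longleftrightarrow> S \<subseteq> carrier G \<and>
     (\<forall>x\<in>carrier G. \<exists>N. \<forall>n\<ge>N. engel_comm G a n x \<in> S)"

definition min_right_engel_sink :: "('a, 'b) monoid_scheme \<Rightarrow> 'a \<Rightarrow> 'a set" where
  "min_right_engel_sink G a =
     (THE S. right_engel_sink G a S \<and> (\<forall>T. right_engel_sink G a T \<longrightarrow> S \<subseteq> T))"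

definition comm_subgroup_elem :: "('a, 'b) monoid_scheme \<Rightarrow> 'a set \<Rightarrow> 'a \<Rightarrow> 'a set" where
  "comm_subgroup_elem G H a =
     generate G {inv\<^bsub>G\<^esub> h \<otimes>\<^bsub>G\<^esub> (inv\<^bsub>G\<^esub> a \<otimes>\<^bsub>G\<^esub> h \<otimes>\<^bsub>G\<^esub> a) | h. h \<in> H}"

end

theory Submission
  imports Defs
begin

(*
  Put d(h) = h^-1 h^a = [h,a]. As H is abelian and normal, d is an endomorphism of H and
  [H,a] = d(H). Writing x = h a^n, one computes [a,x] = (d(h^-1))^(a^n) and
  [k,x] = k^-1 k^(a^n) for k in H, so every [a,_n x] with n >= 1 lies in [H,a]: it is a
  right Engel sink. If k = d(h) is fixed by a, then h^(a^j) = h k^j, so k^|a| = 1; since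
  also k^|H| = 1, coprimality forces k = 1. Hence d is injective on [H,a] and permutes this
  finite set. For k = d(u) and x = a u^-1 one has [a,x] = k and [y,x] = d(y) for y in H, so
  [a,_(n+1) x] = d^n(k) returns to k infinitely often, and k lies in every sink.
*)

lemma funpow_cycle_on:
  assumes "finite S" "f ` S \<subseteq> S" "inj_on f S" "x \<in> S"
  obtains n where "n > 0" "(f ^^ n) x = x"
proof -
  have bij: "bij_betw (f ^^ n) S S" for n
    using assms by (intro bij_betw_funpow) (simp add: bij_betw_def endo_inj_surj)
  have "\<not> inj (\<lambda>n. (f ^^ n) x)"
  proof
    assume "inj (\<lambda>n. (f ^^ n) x)"
    moreover have "range (\<lambda>n. (f ^^ n) x) \<subseteq> S"
      using bij assms(4) by (auto dest: bij_betw_apply)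
    ultimately show False
      using assms(1) finite_imageD finite_subset infinite_UNIV_nat by metis
  qed
  then obtain i j where ij: "i < j" "(f ^^ i) x = (f ^^ j) x"
    unfolding inj_def by (metis linorder_neqE_nat)
  then have "(f ^^ i) ((f ^^ (j - i)) x) = (f ^^ i) x"
    by (metis add_diff_inverse_nat funpow_add less_imp_not_less o_apply)
  moreover have "(f ^^ (j - i)) x \<in> S"
    using bij assms(4) by (auto dest: bij_betw_apply)
  ultimately have "(f ^^ (j - i)) x = x"
    using bij[of i] assms(4) by (auto simp: bij_betw_def dest: inj_onD)
  with ij(1) show thesis by (intro that) auto
qed

lemma funpow_fixed: "f x = x \<Longrightarrow> (f ^^ n) x = x"
  by (induction n) auto

lemma (in group) pow_coprime_eq_one:
  fixes m n :: nat
  assumes "x \<in> carrier G" "x [^] m = \<one>" "x [^] n = \<one>" "coprime m n"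
  shows "x = \<one>"
proof -
  have "ord x dvd m" "ord x dvd n"
    using assms pow_eq_id by auto
  then have "ord x = 1"
    using assms(4) coprime_common_divisor_nat by blast
  then show ?thesis
    using assms(1) ord_eq_1 by simp
qed

lemma (in group) mult_inv_cancel_left [simp]:
  "x \<in> carrier G \<Longrightarrow> y \<in> carrier G \<Longrightarrow> x \<otimes> (inv x \<otimes> y) = y"
  by (simp flip: m_assoc)

lemma (in group) inv_mult_cancel_left [simp]:
  "x \<in> carrier G \<Longrightarrow> y \<in> carrier G \<Longrightarrow> inv x \<otimes> (x \<otimes> y) = y"
  by (simp flip: m_assoc)

lemma min_right_engel_sink_eqI:
  assumes "right_engel_sink G a S" "\<And>T. right_engel_sink G a T \<Longrightarrow> S \<subseteq> T"
  shows "min_right_engel_sink G a = S"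
  unfolding min_right_engel_sink_def
  using assms by (intro the_equality) auto

locale abelian_normal_conj = group G for G (structure) +
  fixes H :: "'a set" and a :: 'a
  assumes normal_H: "H \<lhd> G"
    and H_commute: "\<And>x y. x \<in> H \<Longrightarrow> y \<in> H \<Longrightarrow> x \<otimes> y = y \<otimes> x"
    and a_closed [simp]: "a \<in> carrier G"
begin

definition conj_a :: "'a \<Rightarrow> 'a" where
  "conj_a y = inv a \<otimes> y \<otimes> a"

(* comm_a is the map d of the header, comm_a y = [y,a]; comm_H_a is [H,a]. *)
definition comm_a :: "'a \<Rightarrow> 'a" where
  "comm_a y = inv y \<otimes> conj_a y"

definition comm_H_a :: "'a set" where
  "comm_H_a = comm_a ` H"

lemma subgroup_H: "subgroup H G"
  using normal_H normal_imp_subgroup by blast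

lemma H_closed [simp]: "x \<in> H \<Longrightarrow> x \<in> carrier G"
  using subgroup.mem_carrier[OF subgroup_H] .

lemma conj_a_closed [simp]: "y \<in> carrier G \<Longrightarrow> conj_a y \<in> carrier G"
  unfolding conj_a_def by simp

lemma conj_a_mult: "x \<in> carrier G \<Longrightarrow> y \<in> carrier G \<Longrightarrow> conj_a (x \<otimes> y) = conj_a x \<otimes> conj_a y"
  unfolding conj_a_def by (simp add: m_assoc)

lemma conj_a_inv: "x \<in> carrier G \<Longrightarrow> conj_a (inv x) = inv (conj_a x)"
  unfolding conj_a_def by (simp add: inv_mult_group m_assoc)

lemma conj_a_pow: "x \<in> carrier G \<Longrightarrow> conj_a (x [^] (n::nat)) = conj_a x [^] n"
  by (induction n) (simp_all add: conj_a_mult, simp add: conj_a_def)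

lemma conj_a_funpow: "y \<in> carrier G \<Longrightarrow> (conj_a ^^ n) y = inv (a [^] n) \<otimes> y \<otimes> a [^] n"
proof (induction n)
  case 0
  then show ?case by simp
next
  case (Suc n)
  then show ?case
    by (simp add: conj_a_def inv_mult_group m_assoc nat_pow_Suc2 del: nat_pow_Suc)
qed

lemma conj_a_in_H: "y \<in> H \<Longrightarrow> conj_a y \<in> H"
  unfolding conj_a_def by (rule normal.inv_op_closed1[OF normal_H a_closed])

lemma comm_a_in_H: "y \<in> H \<Longrightarrow> comm_a y \<in> H"
  unfolding comm_a_def
  by (intro subgroup.m_closed[OF subgroup_H] subgroup.m_inv_closed[OF subgroup_H] conj_a_in_H)

lemma comm_a_mult: "x \<in> H \<Longrightarrow> y \<in> H \<Longrightarrow> comm_a (x \<otimes> y) = comm_a x \<otimes> comm_a y"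
proof -
  assume x: "x \<in> H" and y: "y \<in> H"
  have "comm_a (x \<otimes> y) = inv y \<otimes> comm_a x \<otimes> conj_a y"
    unfolding comm_a_def using x y by (simp add: conj_a_mult inv_mult_group m_assoc)
  also have "inv y \<otimes> comm_a x = comm_a x \<otimes> inv y"
    using x y by (intro H_commute comm_a_in_H subgroup.m_inv_closed[OF subgroup_H])
  finally show ?thesis
    unfolding comm_a_def using x y by (simp add: m_assoc)
qed

lemma comm_a_one: "comm_a \<one> = \<one>"
  unfolding comm_a_def conj_a_def by simp

lemma comm_a_inv: "x \<in> H \<Longrightarrow> comm_a (inv x) = inv (comm_a x)"
proof -
  assume x: "x \<in> H"
  then have "comm_a (inv x) \<otimes> comm_a x = \<one>"
    using comm_a_mult[of "inv x" x] subgroup.m_inv_closed[OF subgroup_H] by (simp add: comm_a_one)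
  then show ?thesis
    using x comm_a_in_H subgroup.m_inv_closed[OF subgroup_H] by (simp add: inv_equality)
qed

lemma subgroup_comm_H_a: "subgroup comm_H_a G"
proof (rule subgroupI)
  show "comm_H_a \<subseteq> carrier G"
    unfolding comm_H_a_def using comm_a_in_H by auto
  show "comm_H_a \<noteq> {}"
    unfolding comm_H_a_def using subgroup.one_closed[OF subgroup_H] by blast
next
  fix k assume "k \<in> comm_H_a"
  then obtain u where "u \<in> H" "k = comm_a u"
    unfolding comm_H_a_def by blast
  then show "inv k \<in> comm_H_a"
    unfolding comm_H_a_def using comm_a_inv subgroup.m_inv_closed[OF subgroup_H]
    by (metis image_eqI)
next
  fix k l assume "k \<in> comm_H_a" "l \<in> comm_H_a"
  then obtain u v where "u \<in> H" "v \<in> H" "k = comm_a u" "l = comm_a v"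
    unfolding comm_H_a_def by blast
  then show "k \<otimes> l \<in> comm_H_a"
    unfolding comm_H_a_def using comm_a_mult subgroup.m_closed[OF subgroup_H]
    by (metis image_eqI)
qed

lemma comm_H_a_subset_H: "comm_H_a \<subseteq> H"
  unfolding comm_H_a_def using comm_a_in_H by blast

lemma comm_subgroup_elem_eq_comm_H_a: "comm_subgroup_elem G H a = comm_H_a"
proof -
  have "{inv h \<otimes> (inv a \<otimes> h \<otimes> a) | h. h \<in> H} = comm_H_a"
    unfolding comm_H_a_def comm_a_def conj_a_def by auto
  moreover have "generate G comm_H_a = comm_H_a"
    using generate_subgroup_incl[OF order_refl subgroup_comm_H_a]
    by (auto intro: generate.incl)
  ultimately show ?thesis
    unfolding comm_subgroup_elem_def by simp
qed

lemma conj_a_comm_H_a: "k \<in> comm_H_a \<Longrightarrow> conj_a k \<in> comm_H_a"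
proof -
  assume "k \<in> comm_H_a"
  then obtain y where y: "y \<in> H" "k = comm_a y"
    unfolding comm_H_a_def by blast
  then have "conj_a k = comm_a (conj_a y)"
    unfolding comm_a_def by (simp add: conj_a_mult conj_a_inv)
  then show ?thesis
    unfolding comm_H_a_def using y(1) conj_a_in_H by blast
qed

lemma conj_a_funpow_comm_H_a: "k \<in> comm_H_a \<Longrightarrow> (conj_a ^^ n) k \<in> comm_H_a"
  by (induction n) (simp_all add: conj_a_comm_H_a)

lemma comm_H_a_fixed_pow_ord:
  assumes "k \<in> comm_H_a" "conj_a k = k"
  shows "k [^] ord a = \<one>"
proof -
  obtain h where h: "h \<in> H" "k = comm_a h"
    using assms(1) unfolding comm_H_a_def by blast
  have k: "k \<in> carrier G"
    using h comm_a_in_H by simp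
  have conj_h: "conj_a h = h \<otimes> k"
    using h unfolding comm_a_def by simp
  have iter: "(conj_a ^^ j) h = h \<otimes> k [^] j" for j
  proof (induction j)
    case 0
    then show ?case using h by simp
  next
    case (Suc j)
    have "(conj_a ^^ Suc j) h = conj_a h \<otimes> conj_a k [^] j"
      using Suc h k by (simp add: conj_a_mult conj_a_pow)
    then show ?case
      using conj_h assms(2) h k nat_pow_Suc2[OF k, of j] by (simp add: m_assoc)
  qed
  have "(conj_a ^^ ord a) h = h"
    using h by (simp add: conj_a_funpow)
  then show ?thesis
    using iter h k by (simp add: r_cancel_one)
qed

lemma commutator_a_mult_inv:
  assumes "u \<in> H"
  shows "commutator G a (a \<otimes> inv u) = comm_a u"
proof -
  have "commutator G a (a \<otimes> inv u) = conj_a u \<otimes> inv u"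
    unfolding commutator_def conj_a_def using assms by (simp add: inv_mult_group m_assoc)
  also have "\<dots> = inv u \<otimes> conj_a u"
    using assms by (intro H_commute conj_a_in_H subgroup.m_inv_closed[OF subgroup_H])
  finally show ?thesis
    unfolding comm_a_def .
qed

lemma commutator_H_mult_inv:
  assumes "y \<in> H" "u \<in> H"
  shows "commutator G y (a \<otimes> inv u) = comm_a y"
proof -
  have "commutator G y (a \<otimes> inv u) = inv y \<otimes> (u \<otimes> conj_a y) \<otimes> inv u"
    unfolding commutator_def conj_a_def using assms by (simp add: inv_mult_group m_assoc)
  also have "u \<otimes> conj_a y = conj_a y \<otimes> u"
    using assms by (intro H_commute conj_a_in_H)
  finally show ?thesis
    unfolding comm_a_def using assms by (simp add: m_assoc)
qed

lemma commutator_a_mult_pow: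
  assumes "h \<in> H"
  shows "commutator G a (h \<otimes> a [^] n) = (conj_a ^^ n) (comm_a (inv h))"
proof -
  have "inv a \<otimes> inv (a [^] n) = inv (a [^] n) \<otimes> inv a"
    by (metis a_closed inv_mult_group nat_pow_Suc nat_pow_Suc2 nat_pow_closed)
  then have "commutator G a (h \<otimes> a [^] n) = inv (a [^] n) \<otimes> (conj_a (inv h) \<otimes> h) \<otimes> a [^] n"
    unfolding commutator_def conj_a_def using assms by (simp add: inv_mult_group m_assoc flip: m_assoc)
  also have "conj_a (inv h) \<otimes> h = comm_a (inv h)"
    unfolding comm_a_def using assms
    by (simp add: H_commute conj_a_in_H subgroup.m_inv_closed[OF subgroup_H])
  finally show ?thesis
    using assms comm_a_in_H subgroup.m_inv_closed[OF subgroup_H] by (simp add: conj_a_funpow)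
qed

lemma commutator_H_mult_pow:
  assumes "k \<in> H" "h \<in> H"
  shows "commutator G k (h \<otimes> a [^] n) = inv k \<otimes> (conj_a ^^ n) k"
proof -
  have "k \<otimes> (h \<otimes> a [^] n) = h \<otimes> (k \<otimes> a [^] n)"
    using assms H_commute[OF assms] by (simp flip: m_assoc)
  then show ?thesis
    unfolding commutator_def using assms
    by (simp add: conj_a_funpow inv_mult_group m_assoc)
qed

lemma comm_a_funpow_in_H: "u \<in> H \<Longrightarrow> (comm_a ^^ n) u \<in> H"
  by (induction n) (simp_all add: comm_a_in_H)

lemma engel_comm_a_mult_inv:
  assumes "u \<in> H"
  shows "engel_comm G a (Suc n) (a \<otimes> inv u) = (comm_a ^^ Suc n) u"
proof (induction n)
  case 0
  then show ?case using assms by (simp add: commutator_a_mult_inv)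
next
  case (Suc n)
  then show ?case
    using assms comm_a_funpow_in_H[of u "Suc n"] by (simp add: commutator_H_mult_inv)
qed

end

locale coprime_split_extension = abelian_normal_conj +
  assumes finite_carrier: "finite (carrier G)"
    and carrier_split: "carrier G = H <#> generate G {a}"
    and coprime_ord_card: "coprime (ord a) (card H)"
begin

lemma carrier_elem_split:
  assumes "x \<in> carrier G"
  obtains h n where "h \<in> H" "x = h \<otimes> a [^] (n::nat)"
  using assms carrier_split generate_pow_on_finite_carrier[OF finite_carrier a_closed]
  unfolding set_mult_def by auto

lemma engel_comm_in_comm_H_a:
  assumes "x \<in> carrier G"
  shows "engel_comm G a (Suc n) x \<in> comm_H_a"
proof -
  obtain h m where hm: "h \<in> H" "x = h \<otimes> a [^] (m::nat)"
    using carrier_elem_split[OF assms] .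
  show ?thesis
  proof (induction n)
    case 0
    have "comm_a (inv h) \<in> comm_H_a"
      unfolding comm_H_a_def using hm(1) subgroup.m_inv_closed[OF subgroup_H] by blast
    then show ?case
      using hm by (simp add: commutator_a_mult_pow conj_a_funpow_comm_H_a)
  next
    case (Suc n)
    then have "engel_comm G a (Suc n) x \<in> H"
      using comm_H_a_subset_H by blast
    then show ?case
      using Suc hm subgroup_comm_H_a
      by (simp add: commutator_H_mult_pow conj_a_funpow_comm_H_a subgroup.m_closed subgroup.m_inv_closed)
  qed
qed

lemma right_engel_sink_comm_H_a: "right_engel_sink G a comm_H_a"
  unfolding right_engel_sink_def
proof (intro conjI ballI exI allI impI)
  show "comm_H_a \<subseteq> carrier G"
    using comm_H_a_subset_H by auto
  fix x and n :: nat
  assume "x \<in> carrier G" "1 \<le> n"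
  then show "engel_comm G a n x \<in> comm_H_a"
    using engel_comm_in_comm_H_a[of x "n - 1"] by simp
qed

lemma comm_a_eq_one_imp_one:
  assumes "k \<in> comm_H_a" "comm_a k = \<one>"
  shows "k = \<one>"
proof -
  have k: "k \<in> H" "k \<in> carrier G"
    using assms(1) comm_H_a_subset_H by auto
  have "conj_a k = k \<otimes> comm_a k"
    unfolding comm_a_def using k by simp
  then have "k [^] ord a = \<one>"
    using assms k by (simp add: comm_H_a_fixed_pow_ord)
  moreover have "k [^] card H = \<one>"
  proof -
    interpret H: group "G\<lparr>carrier := H\<rparr>"
      by (rule subgroup_imp_group[OF subgroup_H])
    have "k [^]\<^bsub>G\<lparr>carrier := H\<rparr>\<^esub> order (G\<lparr>carrier := H\<rparr>) = \<one>"
      using k by (simp add: H.pow_order_eq_1)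
    then show ?thesis
      unfolding order_def by (simp flip: nat_pow_consistent)
  qed
  ultimately show ?thesis
    using pow_coprime_eq_one[OF k(2) _ _ coprime_ord_card] by blast
qed

lemma inj_on_comm_a: "inj_on comm_a comm_H_a"
proof (rule inj_onI)
  fix y z
  assume y: "y \<in> comm_H_a" and z: "z \<in> comm_H_a" and eq: "comm_a y = comm_a z"
  have yz: "y \<in> H" "z \<in> H" "inv z \<in> H"
    using y z comm_H_a_subset_H subgroup.m_inv_closed[OF subgroup_H] by auto
  have "comm_a (y \<otimes> inv z) = \<one>"
    using yz eq comm_a_in_H by (simp add: comm_a_mult comm_a_inv)
  moreover have "y \<otimes> inv z \<in> comm_H_a"
    using y z subgroup_comm_H_a by (simp add: subgroup.m_closed subgroup.m_inv_closed)
  ultimately have "y \<otimes> inv z = \<one>"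
    by (rule comm_a_eq_one_imp_one[rotated])
  then show "y = z"
    using yz by (metis H_closed inv_closed inv_equality inv_inv)
qed

lemma comm_H_a_subset_sink:
  assumes "right_engel_sink G a T"
  shows "comm_H_a \<subseteq> T"
proof
  fix k
  assume k: "k \<in> comm_H_a"
  then obtain u where u: "u \<in> H" "k = comm_a u"
    unfolding comm_H_a_def by blast
  have "comm_a ` comm_H_a \<subseteq> comm_H_a"
    using comm_H_a_subset_H by (auto simp: comm_H_a_def)
  moreover have "finite comm_H_a"
    using finite_subset[OF subgroup.subset[OF subgroup_comm_H_a] finite_carrier] .
  ultimately obtain p where p: "p > 0" "(comm_a ^^ p) k = k"
    using funpow_cycle_on[OF _ _ inj_on_comm_a k] by blast
  define x where "x = a \<otimes> inv u"
  have "x \<in> carrier G"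
    unfolding x_def using u by simp
  then obtain N where N: "\<forall>n\<ge>N. engel_comm G a n x \<in> T"
    using assms unfolding right_engel_sink_def by blast
  have "engel_comm G a (Suc (p * N)) x = (comm_a ^^ Suc (p * N)) u"
    unfolding x_def using u(1) by (rule engel_comm_a_mult_inv)
  also have "\<dots> = ((comm_a ^^ p) ^^ N) k"
    unfolding u(2) funpow_mult by (simp only: funpow_Suc_right o_apply)
  also have "\<dots> = k"
    using p(2) by (rule funpow_fixed)
  finally have "engel_comm G a (Suc (p * N)) x = k" .
  moreover have "N \<le> Suc (p * N)"
    using p(1) by (simp add: le_SucI)
  ultimately show "k \<in> T"
    using N by auto
qed

lemma min_right_engel_sink_eq_comm_H_a: "min_right_engel_sink G a = comm_H_a"
  using right_engel_sink_comm_H_a comm_H_a_subset_sink by (rule min_right_engel_sink_eqI)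

end

theorem lemma2p2:
  fixes G (structure) and H :: "'a set" and a :: 'a
  assumes "group G"
    and "finite (carrier G)"
    and "H \<lhd> G"
    and "\<forall>x\<in>H. \<forall>y\<in>H. x \<otimes> y = y \<otimes> x"
    and "a \<in> carrier G"
    and "carrier G = H <#> generate G {a}"
    and "coprime (group.ord G a) (card H)"
  shows "min_right_engel_sink G a = comm_subgroup_elem G H a"
proof -
  interpret coprime_split_extension G H a
    using assms(4)
    by (intro coprime_split_extension.intro abelian_normal_conj.intro
        abelian_normal_conj_axioms.intro coprime_split_extension_axioms.intro assms(1-3,5-7)) blast
  show ?thesis
    by (simp add: min_right_engel_sink_eq_comm_H_a comm_subgroup_elem_eq_comm_H_a)
qed

end
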